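(* Let $A\subseteq\mathbb{Z}^d$ be finite such that $\delta_A$ is a spectral measure, and let $\nu$ be a Borel probability measure on $\mathbb{R}^d$ which is spectral with a spectrum contained in $\mathbb{Z}^d$. Then $\mu=\delta_A*\nu$ is a spectral measure.
   Context: $\delta_A=\frac{1}{\#A}\sum_{a\in A}\delta_a$. A Borel probability measure $\mu$ on $\mathbb{R}^d$ is spectral if there is a countable $\Lambda\subseteq\mathbb{R}^d$ (a spectrum) such that $\{e^{2\pi i\lambda\cdot x}:\lambda\in\Lambda\}$ is an orthonormal basis of $L^2(\mu)$. *)

theory Defs
  imports "HOL-Analysis.Analysis" "HOL-Probability.Probability"
begin

definition expo :: "real^'n \<Rightarrow> real^'n \<Rightarrow> complex" where
  "expo l x = exp (2 * complex_of_real pi * \<i> * complex_of_real (l \<bullet> x))"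

definition is_spectrum :: "(real^'n) measure \<Rightarrow> (real^'n) set \<Rightarrow> bool" where
  "is_spectrum \<mu> \<Lambda> \<longleftrightarrow>
     (\<forall>l\<in>\<Lambda>. \<forall>l'\<in>\<Lambda>.
        (\<integral>x. expo l x * cnj (expo l' x) \<partial>\<mu>) = (if l = l' then 1 else 0)) \<and>
     (\<forall>f :: real^'n \<Rightarrow> complex.
        f \<in> borel_measurable \<mu> \<and> integrable \<mu> (\<lambda>x. (cmod (f x))\<^sup>2) \<and>
        (\<forall>l\<in>\<Lambda>. (\<integral>x. f x * cnj (expo l x) \<partial>\<mu>) = 0)
        \<longrightarrow> (AE x in \<mu>. f x = 0))"

definition spectral :: "(real^'n) measure \<Rightarrow> bool" where
  "spectral \<mu> \<longleftrightarrow> prob_space \<mu> \<and> sets \<mu> = sets borel \<and>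
     (\<exists>\<Lambda>. countable \<Lambda> \<and> is_spectrum \<mu> \<Lambda>)"

definition delta_set :: "(real^'n) set \<Rightarrow> (real^'n) measure" where
  "delta_set A = measure_of UNIV (sets borel)
     (\<lambda>S. ennreal (real (card (A \<inter> S)) / real (card A)))"

definition int_lattice :: "(real^'n) set" where
  "int_lattice = {x. \<forall>i. x $ i \<in> \<int>}"

end

theory Submission
  imports Defs
begin

text \<open>
  Let \<Gamma> be a spectrum of delta_A; we show that \<Gamma> + \<Lambda> is a spectrum of delta_A * \<nu>.
  Since A and \<Lambda> lie in the integer lattice, e_m = 1 on A for every m \<in> \<Lambda>, so e_m is
  invariant under translation by elements of A. Hence the inner product of e_(g+m) and
  e_(g'+m') in L2(delta_A * \<nu>) is the product of the inner product of e_g and e_g' in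
  L2(delta_A) and that of e_(g+m) and e_(g'+m') in L2(\<nu>), which gives orthonormality.
  For completeness, let f \<in> L2(delta_A * \<nu>) be orthogonal to all e_(g+m). For fixed g \<in> \<Gamma>
  the function H(y) = \<Sum>a\<in>A. f(a + y) cnj(e_g(a + y)) lies in L2(\<nu>), and its inner product
  with e_m is #A times that of f with e_(g+m); so H vanishes \<nu>-a.e. by completeness of \<Lambda>.
  As \<Gamma> is countable, for \<nu>-almost every y the function a \<mapsto> f(a + y) on A is then
  orthogonal to every e_g in L2(delta_A), hence zero, and so f vanishes (delta_A * \<nu>)-a.e.
\<close>

lemma is_spectrum_complete:
  assumes "is_spectrum M \<Lambda>" "f \<in> borel_measurable M" "integrable M (\<lambda>x. (cmod (f x))\<^sup>2)"
    and "\<And>l. l \<in> \<Lambda> \<Longrightarrow> (\<integral>x. f x * cnj (expo l x) \<partial>M) = 0"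
  shows "AE x in M. f x = 0"
  using assms unfolding is_spectrum_def by blast

lemma sets_delta_set [simp]: "sets (delta_set A) = sets borel"
  by (simp add: delta_set_def sets.sigma_sets_eq[of borel, unfolded space_borel])

lemma space_delta_set [simp]: "space (delta_set A) = UNIV"
  by (simp add: delta_set_def)

lemma delta_set_eq_distr:
  fixes A :: "(real^'n) set"
  assumes "finite A"
  shows "delta_set A = distr (uniform_count_measure A) borel (\<lambda>x. x)"
proof -
  let ?D = "distr (uniform_count_measure A) borel (\<lambda>x. x)"
  have "?D = measure_of UNIV (sets borel) (emeasure ?D)"
    using measure_of_of_measure[of ?D] by simp
  also have "\<dots> = delta_set A"
    unfolding delta_set_def
  proof (rule measure_of_eq)
    fix S :: "(real^'n) set" assume "S \<in> sigma_sets UNIV (sets borel)"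
    then have "S \<in> sets borel" by (metis sets.sigma_sets_eq space_borel)
    with assms show "emeasure ?D S = ennreal (real (card (A \<inter> S)) / real (card A))"
      by (simp add: emeasure_distr space_uniform_count_measure emeasure_uniform_count_measure
          Int_commute divide_ennreal ennreal_of_nat_eq_real_of_nat)
  qed simp
  finally show ?thesis ..
qed

lemma not_prob_space_delta_set_empty: "\<not> prob_space (delta_set ({} :: (real^'n) set))"
proof
  assume "prob_space (delta_set ({} :: (real^'n) set))"
  then have "emeasure (delta_set ({} :: (real^'n) set)) UNIV = 1"
    using prob_space.emeasure_space_1 by fastforce
  then show False by (simp add: delta_set_eq_distr emeasure_distr space_uniform_count_measure)
qed

lemma finite_measure_delta_set:
  fixes A :: "(real^'n) set"
  assumes "finite A"
  shows "finite_measure (delta_set A)"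
proof (rule finite_measureI)
  have "emeasure (delta_set A) UNIV = card A / card A"
    using assms by (simp add: delta_set_eq_distr emeasure_distr space_uniform_count_measure
        emeasure_uniform_count_measure)
  then show "emeasure (delta_set A) (space (delta_set A)) \<noteq> \<infinity>"
    by (simp add: divide_ennreal_def)
qed

lemma nn_integral_delta_set:
  fixes A :: "(real^'n) set"
  assumes "finite A" and [measurable]: "h \<in> borel_measurable borel"
  shows "(\<integral>\<^sup>+x. h x \<partial>delta_set A) = ennreal (1 / card A) * (\<Sum>a\<in>A. h a)"
  using assms by (simp add: delta_set_eq_distr nn_integral_distr uniform_count_measure_def
      nn_integral_point_measure_finite sum_distrib_left divide_ennreal
      ennreal_of_nat_eq_real_of_nat)

lemma integral_delta_set:
  fixes A :: "(real^'n) set" and h :: "real^'n \<Rightarrow> 'b::{banach, second_countable_topology}"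
  assumes "finite A" and [measurable]: "h \<in> borel_measurable borel"
  shows "(\<integral>x. h x \<partial>delta_set A) = (\<Sum>a\<in>A. h a) /\<^sub>R card A"
  using assms by (simp add: delta_set_eq_distr integral_distr uniform_count_measure_def
      lebesgue_integral_point_measure_finite scaleR_sum_right divide_inverse_commute)

lemma integrable_delta_set:
  fixes A :: "(real^'n) set" and h :: "real^'n \<Rightarrow> 'b::{banach, second_countable_topology}"
  assumes "finite A" and [measurable]: "h \<in> borel_measurable borel"
  shows "integrable (delta_set A) h"
  using assms by (simp add: delta_set_eq_distr integrable_distr_eq uniform_count_measure_def
      integrable_point_measure_finite)

lemma AE_delta_set_D:
  fixes A :: "(real^'n) set"
  assumes "finite A" and "AE x in delta_set A. P x" and "a \<in> A"
  shows "P a"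
proof -
  obtain N where N: "{x. \<not> P x} \<subseteq> N" "N \<in> sets borel" "emeasure (delta_set A) N = 0"
    using assms(2) by (auto elim!: AE_E)
  then have "card (A \<inter> N) / card A = 0"
    using assms(1) by (simp add: delta_set_eq_distr emeasure_distr space_uniform_count_measure
        emeasure_uniform_count_measure Int_commute)
  then have "A \<inter> N = {}"
    using assms by (auto simp: divide_ennreal_def ennreal_of_nat_eq_real_of_nat card_gt_0_iff)
  with N(1) assms(3) show ?thesis by blast
qed

lemma prob_space_convolution:
  assumes "prob_space M" "prob_space N"
    and [measurable_cong]: "sets M = sets borel" "sets N = sets borel"
  shows "prob_space (M \<star> N)"
  unfolding convolution_def
  by (rule prob_space.prob_space_distr[OF prob_space_pair[OF assms(1,2)]]) measurable

lemma integral_convolution: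
  fixes g :: "'a::ordered_euclidean_space \<Rightarrow> 'b::{banach, second_countable_topology}"
  assumes "finite_measure M" "finite_measure N"
    and [measurable_cong]: "sets M = sets borel" "sets N = sets borel"
    and [measurable]: "g \<in> borel_measurable borel" and "integrable (M \<star> N) g"
  shows "(\<integral>x. g x \<partial>(M \<star> N)) = (\<integral>x. \<integral>y. g (x + y) \<partial>N \<partial>M)"
proof -
  interpret M: finite_measure M by fact
  interpret N: finite_measure N by fact
  interpret pair_sigma_finite M N ..
  have "integrable (M \<Otimes>\<^sub>M N) (\<lambda>(x, y). g (x + y))"
    using assms(6) unfolding convolution_def
    by (subst (asm) integrable_distr_eq) (auto simp: case_prod_unfold)
  from integral_fst'[OF this] show ?thesis
    unfolding convolution_def by (simp add: integral_distr case_prod_unfold)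
qed

lemma (in finite_measure) square_integrable_norm_imp_integrable:
  fixes f :: "'a \<Rightarrow> 'b::{second_countable_topology, banach, real_normed_div_algebra}"
  assumes [measurable]: "f \<in> borel_measurable M" and "integrable M (\<lambda>x. (norm (f x))\<^sup>2)"
  shows "integrable M f"
proof (rule square_integrable_imp_integrable[OF assms(1)])
  have "(\<lambda>x. f x ^ 2) \<in> borel_measurable M" by measurable
  moreover have "integrable M (\<lambda>x. norm (f x ^ 2))"
    using assms(2) by (simp add: norm_power)
  ultimately show "integrable M (\<lambda>x. f x ^ 2)"
    using integrable_norm_iff by blast
qed

lemma integrable_mult_bounded:
  fixes h k :: "'a \<Rightarrow> 'b::{banach, second_countable_topology, real_normed_div_algebra}"
  assumes "integrable M h" "k \<in> borel_measurable M" "\<And>x. norm (k x) \<le> B"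
  shows "integrable M (\<lambda>x. h x * k x)"
proof (rule Bochner_Integration.integrable_bound)
  show "integrable M (\<lambda>x. B *\<^sub>R h x)" using assms(1) by simp
  show "(\<lambda>x. h x * k x) \<in> borel_measurable M"
    using assms(1,2) by (simp add: borel_measurable_integrable)
  show "AE x in M. norm (h x * k x) \<le> norm (B *\<^sub>R h x)"
  proof (rule AE_I2)
    fix x
    have "0 \<le> B" using norm_ge_zero assms(3) order_trans by blast
    moreover have "norm (h x) * norm (k x) \<le> norm (h x) * B"
      using assms(3) by (simp add: mult_left_mono)
    ultimately show "norm (h x * k x) \<le> norm (B *\<^sub>R h x)"
      by (simp add: norm_mult mult.commute)
  qed
qed

lemma expo_add_left: "expo (l + l') x = expo l x * expo l' x"
  unfolding expo_def by (simp add: inner_add_left distrib_left exp_add[symmetric])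

lemma expo_add_right: "expo l (x + y) = expo l x * expo l y"
  unfolding expo_def by (simp add: inner_add_right distrib_left exp_add[symmetric])

lemma cnj_expo: "cnj (expo l x) = expo (- l) x"
  unfolding expo_def by (simp add: exp_cnj)

lemma norm_expo [simp]: "norm (expo l x) = 1"
  unfolding expo_def by (simp add: norm_exp_eq_Re)

lemma expo_neq_0 [simp]: "expo l x \<noteq> 0"
  unfolding expo_def by simp

lemma expo_mult_cnj_expo: "expo l x * cnj (expo l' x) = expo (l - l') x"
  by (simp add: cnj_expo expo_add_left[symmetric])

lemma borel_measurable_cnj [measurable (raw)]:
  "f \<in> borel_measurable M \<Longrightarrow> (\<lambda>x. cnj (f x)) \<in> borel_measurable M"
  by (erule measurable_compose) (intro borel_measurable_continuous_onI continuous_intros)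

lemma borel_measurable_expo [measurable]: "expo l \<in> borel_measurable borel"
  unfolding expo_def by measurable

lemma expo_int_lattice:
  assumes "l \<in> int_lattice" "x \<in> int_lattice"
  shows "expo l x = 1"
proof -
  have "l \<bullet> x = (\<Sum>i\<in>UNIV. l $ i * x $ i)" by (simp add: inner_vec_def)
  also have "\<dots> \<in> \<int>" using assms unfolding int_lattice_def by (intro Ints_sum Ints_mult) auto
  finally obtain k where "l \<bullet> x = of_int k" by (auto elim: Ints_cases)
  moreover have "exp ((2 * of_int k * pi) * \<i>) = 1" by (intro exp_integer_2pi) simp
  ultimately show ?thesis unfolding expo_def by (simp add: mult_ac)
qed

lemma is_spectrum_delta_set_sum_eq_0:
  fixes A :: "(real^'n) set" and \<phi> :: "real^'n \<Rightarrow> complex"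
  assumes "finite A" "is_spectrum (delta_set A) \<Gamma>" and [measurable]: "\<phi> \<in> borel_measurable borel"
    and "\<And>g. g \<in> \<Gamma> \<Longrightarrow> (\<Sum>a\<in>A. \<phi> a * cnj (expo g a)) = 0" and "a \<in> A"
  shows "\<phi> a = 0"
proof -
  have "(\<integral>x. \<phi> x * cnj (expo g x) \<partial>delta_set A) = 0" if "g \<in> \<Gamma>" for g
    using assms(1) assms(4)[OF that] by (simp add: integral_delta_set)
  moreover have "integrable (delta_set A) (\<lambda>x. (cmod (\<phi> x))\<^sup>2)"
    using assms(1) by (intro integrable_delta_set) measurable
  moreover have "\<phi> \<in> borel_measurable (delta_set A)"
    using assms(3) by (simp only: measurable_cong_sets[OF sets_delta_set refl])
  ultimately have "AE x in delta_set A. \<phi> x = 0"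
    by (intro is_spectrum_complete[OF assms(2)]) auto
  then show ?thesis by (rule AE_delta_set_D[OF assms(1) _ assms(5)])
qed

context
  fixes A :: "(real^'n) set" and \<nu> :: "(real^'n) measure"
  assumes finite_A: "finite A" and finite_measure_\<nu>: "finite_measure \<nu>"
    and sets_\<nu> [measurable_cong]: "sets \<nu> = sets borel"
begin

interpretation \<nu>: finite_measure \<nu> by (rule finite_measure_\<nu>)

lemma nn_integral_delta_set_convolution:
  assumes [measurable]: "g \<in> borel_measurable borel"
  shows "(\<integral>\<^sup>+x. g x \<partial>(delta_set A \<star> \<nu>)) = ennreal (1 / card A) * (\<Sum>a\<in>A. \<integral>\<^sup>+y. g (a + y) \<partial>\<nu>)"
proof -
  have "(\<integral>\<^sup>+x. g x \<partial>(delta_set A \<star> \<nu>)) = (\<integral>\<^sup>+x. \<integral>\<^sup>+y. g (x + y) \<partial>\<nu> \<partial>delta_set A)"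
    using finite_measure_delta_set[OF finite_A] finite_measure_\<nu> sets_\<nu>
    by (intro nn_integral_convolution) simp_all
  also have "\<dots> = ennreal (1 / card A) * (\<Sum>a\<in>A. \<integral>\<^sup>+y. g (a + y) \<partial>\<nu>)"
    using finite_A by (intro nn_integral_delta_set) measurable
  finally show ?thesis .
qed

lemma integral_delta_set_convolution:
  fixes g :: "real^'n \<Rightarrow> 'b::{banach, second_countable_topology}"
  assumes [measurable]: "g \<in> borel_measurable borel" and "integrable (delta_set A \<star> \<nu>) g"
  shows "(\<integral>x. g x \<partial>(delta_set A \<star> \<nu>)) = (\<Sum>a\<in>A. \<integral>y. g (a + y) \<partial>\<nu>) /\<^sub>R card A"
proof -
  have "(\<integral>x. g x \<partial>(delta_set A \<star> \<nu>)) = (\<integral>x. \<integral>y. g (x + y) \<partial>\<nu> \<partial>delta_set A)"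
    using finite_measure_delta_set[OF finite_A] finite_measure_\<nu> sets_\<nu> assms
    by (intro integral_convolution) simp_all
  also have "\<dots> = (\<Sum>a\<in>A. \<integral>y. g (a + y) \<partial>\<nu>) /\<^sub>R card A"
    using finite_A by (intro integral_delta_set) measurable
  finally show ?thesis .
qed

lemma integrable_delta_set_convolution_shift:
  fixes g :: "real^'n \<Rightarrow> 'b::{banach, second_countable_topology}"
  assumes [measurable]: "g \<in> borel_measurable borel"
    and "integrable (delta_set A \<star> \<nu>) g" and "a \<in> A"
  shows "integrable \<nu> (\<lambda>y. g (a + y))"
proof -
  have "ennreal (1 / card A) * (\<Sum>a\<in>A. \<integral>\<^sup>+y. norm (g (a + y)) \<partial>\<nu>) < \<infinity>"
    using assms(2) by (simp add: integrable_iff_bounded nn_integral_delta_set_convolution)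
  moreover have "ennreal (1 / card A) \<noteq> 0"
    using finite_A assms(3) by (auto simp: card_gt_0_iff)
  ultimately have "(\<Sum>a\<in>A. \<integral>\<^sup>+y. norm (g (a + y)) \<partial>\<nu>) < \<infinity>"
    by (auto simp: ennreal_mult_less_top)
  then have "(\<integral>\<^sup>+y. norm (g (a + y)) \<partial>\<nu>) < \<infinity>"
    using finite_A assms(3) by (simp add: less_top)
  moreover have "(\<lambda>y. g (a + y)) \<in> borel_measurable \<nu>" by measurable
  ultimately show ?thesis by (simp add: integrable_iff_bounded)
qed

lemma AE_delta_set_convolution_eq_0:
  fixes f :: "real^'n \<Rightarrow> 'b::{banach, second_countable_topology}"
  assumes [measurable]: "f \<in> borel_measurable borel"
    and "AE y in \<nu>. \<forall>a\<in>A. f (a + y) = 0"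
  shows "AE x in delta_set A \<star> \<nu>. f x = 0"
proof -
  have "(\<integral>\<^sup>+y. norm (f (a + y)) \<partial>\<nu>) = 0" if "a \<in> A" for a
    using assms(2) that by (intro nn_integral_zero') (auto elim!: eventually_mono)
  then have "(\<integral>\<^sup>+x. norm (f x) \<partial>(delta_set A \<star> \<nu>)) = 0"
    by (simp add: nn_integral_delta_set_convolution)
  then show ?thesis by (subst (asm) nn_integral_0_iff_AE) auto
qed

lemma integrable_delta_set_convolution_bounded:
  fixes h :: "real^'n \<Rightarrow> 'b::{banach, second_countable_topology}"
  assumes "h \<in> borel_measurable borel" "\<And>x. norm (h x) \<le> B"
  shows "integrable (delta_set A \<star> \<nu>) h"
  using assms convolution_finite[OF finite_measure_delta_set[OF finite_A] finite_measure_\<nu> sets_\<nu>]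
  by (intro finite_measure.integrable_const_bound[where B=B]) auto

lemma integral_expo_delta_set_convolution:
  assumes "A \<subseteq> int_lattice" "m \<in> int_lattice" "m' \<in> int_lattice"
  shows "(\<integral>x. expo (g + m) x * cnj (expo (g' + m') x) \<partial>(delta_set A \<star> \<nu>)) =
    (\<integral>x. expo g x * cnj (expo g' x) \<partial>delta_set A) *
    (\<integral>y. expo (g + m) y * cnj (expo (g' + m') y) \<partial>\<nu>)"
proof -
  let ?l = "g + m - (g' + m')"
  have shift: "expo ?l (a + y) = expo (g - g') a * expo ?l y" if "a \<in> A" for a y
  proof -
    have "expo m a = 1" "expo m' a = 1"
      using assms that by (auto intro: expo_int_lattice)
    then have "expo ?l a = expo g a * cnj (expo g' a)"
      by (simp flip: expo_mult_cnj_expo add: expo_add_left)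
    then show ?thesis by (simp add: expo_add_right expo_mult_cnj_expo)
  qed
  have "(\<integral>x. expo (g + m) x * cnj (expo (g' + m') x) \<partial>(delta_set A \<star> \<nu>))
      = (\<Sum>a\<in>A. \<integral>y. expo ?l (a + y) \<partial>\<nu>) /\<^sub>R card A"
    unfolding expo_mult_cnj_expo
    by (intro integral_delta_set_convolution integrable_delta_set_convolution_bounded[of _ 1]) auto
  also have "\<dots> = (\<Sum>a\<in>A. expo (g - g') a) /\<^sub>R card A * (\<integral>y. expo ?l y \<partial>\<nu>)"
    by (simp add: shift sum_distrib_right)
  also have "\<dots> = (\<integral>x. expo g x * cnj (expo g' x) \<partial>delta_set A) *
      (\<integral>y. expo (g + m) y * cnj (expo (g' + m') y) \<partial>\<nu>)"
    using finite_A by (simp add: expo_mult_cnj_expo integral_delta_set)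
  finally show ?thesis .
qed

lemma integral_mult_cnj_expo_delta_set_convolution:
  fixes h :: "real^'n \<Rightarrow> complex"
  assumes "A \<subseteq> int_lattice" "m \<in> int_lattice"
    and [measurable]: "h \<in> borel_measurable borel" and "integrable (delta_set A \<star> \<nu>) h"
  shows "(\<integral>x. h x * cnj (expo m x) \<partial>(delta_set A \<star> \<nu>)) =
    (\<integral>y. (\<Sum>a\<in>A. h (a + y)) * cnj (expo m y) \<partial>\<nu>) /\<^sub>R card A"
proof -
  have "(\<integral>x. h x * cnj (expo m x) \<partial>(delta_set A \<star> \<nu>))
      = (\<Sum>a\<in>A. \<integral>y. h (a + y) * cnj (expo m (a + y)) \<partial>\<nu>) /\<^sub>R card A"
    using assms(4)
    by (intro integral_delta_set_convolution integrable_mult_bounded[of _ _ _ 1]) auto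
  also have "(\<Sum>a\<in>A. \<integral>y. h (a + y) * cnj (expo m (a + y)) \<partial>\<nu>)
      = (\<Sum>a\<in>A. \<integral>y. h (a + y) * cnj (expo m y) \<partial>\<nu>)"
    using assms(1,2) by (intro sum.cong refl) (auto simp: expo_add_right expo_int_lattice)
  also have "\<dots> = (\<integral>y. (\<Sum>a\<in>A. h (a + y)) * cnj (expo m y) \<partial>\<nu>)"
    using assms(4) unfolding sum_distrib_right
    by (intro Bochner_Integration.integral_sum[symmetric] integrable_mult_bounded[of _ _ _ 1]
        integrable_delta_set_convolution_shift) auto
  finally show ?thesis .
qed

lemma square_integrable_sum_shift:
  fixes h :: "real^'n \<Rightarrow> 'b::{banach, second_countable_topology}"
  assumes [measurable]: "h \<in> borel_measurable borel"
    and "integrable (delta_set A \<star> \<nu>) (\<lambda>x. (norm (h x))\<^sup>2)"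
  shows "integrable \<nu> (\<lambda>y. (norm (\<Sum>a\<in>A. h (a + y)))\<^sup>2)"
proof (rule Bochner_Integration.integrable_bound)
  show "integrable \<nu> (\<lambda>y. (\<Sum>a\<in>A. (norm (h (a + y)))\<^sup>2) * card A)"
    using assms(2)
    by (intro integrable_mult_left Bochner_Integration.integrable_sum
        integrable_delta_set_convolution_shift) auto
  show "(\<lambda>y. (norm (\<Sum>a\<in>A. h (a + y)))\<^sup>2) \<in> borel_measurable \<nu>" by measurable
  show "AE y in \<nu>. norm ((norm (\<Sum>a\<in>A. h (a + y)))\<^sup>2)
      \<le> norm ((\<Sum>a\<in>A. (norm (h (a + y)))\<^sup>2) * card A)"
  proof (rule AE_I2)
    fix y
    have "(norm (\<Sum>a\<in>A. h (a + y)))\<^sup>2 \<le> (\<Sum>a\<in>A. norm (h (a + y)))\<^sup>2"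
      by (intro power_mono norm_sum) simp
    also have "\<dots> \<le> (\<Sum>a\<in>A. (norm (h (a + y)))\<^sup>2) * card A"
      by (rule sum_squared_le_sum_of_squares)
    finally show "norm ((norm (\<Sum>a\<in>A. h (a + y)))\<^sup>2) \<le> norm ((\<Sum>a\<in>A. (norm (h (a + y)))\<^sup>2) * card A)"
      by simp
  qed
qed

lemma orthonormal_expo_delta_set_convolution:
  assumes "A \<subseteq> int_lattice" "is_spectrum (delta_set A) \<Gamma>" "\<Lambda> \<subseteq> int_lattice" "is_spectrum \<nu> \<Lambda>"
    and "g \<in> \<Gamma>" "g' \<in> \<Gamma>" "m \<in> \<Lambda>" "m' \<in> \<Lambda>"
  shows "(\<integral>x. expo (g + m) x * cnj (expo (g' + m') x) \<partial>(delta_set A \<star> \<nu>)) =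
    (if g = g' \<and> m = m' then 1 else 0)"
proof -
  have "(\<integral>x. expo (g + m) x * cnj (expo (g' + m') x) \<partial>(delta_set A \<star> \<nu>)) =
    (\<integral>x. expo g x * cnj (expo g' x) \<partial>delta_set A) *
    (\<integral>y. expo (g + m) y * cnj (expo (g' + m') y) \<partial>\<nu>)"
    using assms by (intro integral_expo_delta_set_convolution) auto
  also have "\<dots> = (if g = g' \<and> m = m' then 1 else 0)"
  proof (cases "g = g'")
    case True
    then have "(\<integral>y. expo (g + m) y * cnj (expo (g' + m') y) \<partial>\<nu>)
        = (\<integral>y. expo m y * cnj (expo m' y) \<partial>\<nu>)"
      by (simp add: expo_mult_cnj_expo)
    with True show ?thesis
      using assms unfolding is_spectrum_def by simp
  next
    case False
    then show ?thesis
      using assms unfolding is_spectrum_def by simp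
  qed
  finally show ?thesis .
qed

lemma AE_sum_shift_mult_cnj_expo_eq_0:
  fixes f :: "real^'n \<Rightarrow> complex"
  assumes "A \<noteq> {}" "A \<subseteq> int_lattice" "\<Lambda> \<subseteq> int_lattice" "is_spectrum \<nu> \<Lambda>"
    and [measurable]: "f \<in> borel_measurable borel"
    and square_integrable: "integrable (delta_set A \<star> \<nu>) (\<lambda>x. (cmod (f x))\<^sup>2)"
    and orthogonal: "\<And>m. m \<in> \<Lambda> \<Longrightarrow> (\<integral>x. f x * cnj (expo (g + m) x) \<partial>(delta_set A \<star> \<nu>)) = 0"
  shows "AE y in \<nu>. (\<Sum>a\<in>A. f (a + y) * cnj (expo g (a + y))) = 0"
proof (rule is_spectrum_complete[OF assms(4)])
  show "(\<lambda>y. \<Sum>a\<in>A. f (a + y) * cnj (expo g (a + y))) \<in> borel_measurable \<nu>" by measurable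
  show "integrable \<nu> (\<lambda>y. (cmod (\<Sum>a\<in>A. f (a + y) * cnj (expo g (a + y))))\<^sup>2)"
    using square_integrable by (intro square_integrable_sum_shift) (auto simp: norm_mult)
next
  interpret \<mu>: finite_measure "delta_set A \<star> \<nu>"
    using finite_measure_delta_set[OF finite_A] finite_measure_\<nu> sets_\<nu>
    by (intro convolution_finite) simp_all
  have "integrable (delta_set A \<star> \<nu>) f"
    by (rule \<mu>.square_integrable_norm_imp_integrable[OF _ square_integrable])
      (simp only: measurable_convolution2 assms(5))
  fix m assume "m \<in> \<Lambda>"
  have "(\<integral>y. (\<Sum>a\<in>A. f (a + y) * cnj (expo g (a + y))) * cnj (expo m y) \<partial>\<nu>) /\<^sub>R card A
      = (\<integral>x. f x * cnj (expo g x) * cnj (expo m x) \<partial>(delta_set A \<star> \<nu>))"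
    using \<open>m \<in> \<Lambda>\<close> assms(2,3) \<open>integrable (delta_set A \<star> \<nu>) f\<close>
    by (intro integral_mult_cnj_expo_delta_set_convolution[symmetric]
        integrable_mult_bounded[of _ _ _ 1]) auto
  also have "\<dots> = (\<integral>x. f x * cnj (expo (g + m) x) \<partial>(delta_set A \<star> \<nu>))"
    by (simp add: expo_add_left mult.assoc)
  also have "\<dots> = 0" using orthogonal \<open>m \<in> \<Lambda>\<close> .
  finally show "(\<integral>y. (\<Sum>a\<in>A. f (a + y) * cnj (expo g (a + y))) * cnj (expo m y) \<partial>\<nu>) = 0"
    using finite_A assms(1) by simp
qed

lemma complete_expo_delta_set_convolution:
  fixes f :: "real^'n \<Rightarrow> complex"
  assumes "A \<noteq> {}" "A \<subseteq> int_lattice" "countable \<Gamma>" "is_spectrum (delta_set A) \<Gamma>"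
    and "\<Lambda> \<subseteq> int_lattice" "is_spectrum \<nu> \<Lambda>"
    and [measurable]: "f \<in> borel_measurable borel"
    and "integrable (delta_set A \<star> \<nu>) (\<lambda>x. (cmod (f x))\<^sup>2)"
    and "\<And>g m. g \<in> \<Gamma> \<Longrightarrow> m \<in> \<Lambda> \<Longrightarrow> (\<integral>x. f x * cnj (expo (g + m) x) \<partial>(delta_set A \<star> \<nu>)) = 0"
  shows "AE x in delta_set A \<star> \<nu>. f x = 0"
proof (rule AE_delta_set_convolution_eq_0[OF assms(7)])
  have "\<forall>g\<in>\<Gamma>. AE y in \<nu>. (\<Sum>a\<in>A. f (a + y) * cnj (expo g (a + y))) = 0"
    using assms by (blast intro: AE_sum_shift_mult_cnj_expo_eq_0)
  then have "AE y in \<nu>. \<forall>g\<in>\<Gamma>. (\<Sum>a\<in>A. f (a + y) * cnj (expo g (a + y))) = 0"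
    using assms(3) by (simp add: AE_ball_countable)
  then show "AE y in \<nu>. \<forall>a\<in>A. f (a + y) = 0"
  proof (rule eventually_mono)
    fix y assume vanishing: "\<forall>g\<in>\<Gamma>. (\<Sum>a\<in>A. f (a + y) * cnj (expo g (a + y))) = 0"
    have "(\<Sum>a\<in>A. f (a + y) * cnj (expo g (a + y)))
        = cnj (expo g y) * (\<Sum>a\<in>A. f (a + y) * cnj (expo g a))" for g
      unfolding sum_distrib_left by (intro sum.cong refl) (simp add: expo_add_right mult_ac)
    with vanishing have "(\<Sum>a\<in>A. f (a + y) * cnj (expo g a)) = 0" if "g \<in> \<Gamma>" for g
      using that by simp
    moreover have "(\<lambda>x. f (x + y)) \<in> borel_measurable borel" by measurable
    ultimately show "\<forall>a\<in>A. f (a + y) = 0"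
      using is_spectrum_delta_set_sum_eq_0[OF finite_A assms(4), of "\<lambda>x. f (x + y)"] by blast
  qed
qed

lemma is_spectrum_delta_set_convolution:
  assumes "A \<noteq> {}" "A \<subseteq> int_lattice" "countable \<Gamma>" "is_spectrum (delta_set A) \<Gamma>"
    and "\<Lambda> \<subseteq> int_lattice" "is_spectrum \<nu> \<Lambda>"
  shows "is_spectrum (delta_set A \<star> \<nu>) ((\<lambda>(g, m). g + m) ` (\<Gamma> \<times> \<Lambda>))"
  unfolding is_spectrum_def
proof (intro conjI ballI allI impI)
  fix l l' assume "l \<in> (\<lambda>(g, m). g + m) ` (\<Gamma> \<times> \<Lambda>)" "l' \<in> (\<lambda>(g, m). g + m) ` (\<Gamma> \<times> \<Lambda>)"
  then obtain g m g' m'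
    where decomp: "g \<in> \<Gamma>" "m \<in> \<Lambda>" "l = g + m" "g' \<in> \<Gamma>" "m' \<in> \<Lambda>" "l' = g' + m'"
    by auto
  show "(\<integral>x. expo l x * cnj (expo l' x) \<partial>(delta_set A \<star> \<nu>)) = (if l = l' then 1 else 0)"
  proof (cases "l = l'")
    case True
    then show ?thesis
      using orthonormal_expo_delta_set_convolution[of \<Gamma> \<Lambda> g g m m] assms decomp by simp
  next
    case False
    then show ?thesis
      using orthonormal_expo_delta_set_convolution[of \<Gamma> \<Lambda> g g' m m'] assms decomp by auto
  qed
next
  fix f :: "real^'n \<Rightarrow> complex"
  assume "f \<in> borel_measurable (delta_set A \<star> \<nu>) \<and>
    integrable (delta_set A \<star> \<nu>) (\<lambda>x. (cmod (f x))\<^sup>2) \<and>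
    (\<forall>l\<in>(\<lambda>(g, m). g + m) ` (\<Gamma> \<times> \<Lambda>). (\<integral>x. f x * cnj (expo l x) \<partial>(delta_set A \<star> \<nu>)) = 0)"
  then show "AE x in delta_set A \<star> \<nu>. f x = 0"
    using assms by (intro complete_expo_delta_set_convolution[of \<Gamma> \<Lambda>]) auto
qed

end

theorem corollary2p5:
  fixes A :: "(real^'n) set" and \<nu> :: "(real^'n) measure"
  assumes "finite A" and "A \<subseteq> int_lattice"
    and "spectral (delta_set A)"
    and "prob_space \<nu>" and "sets \<nu> = sets borel"
    and "countable \<Lambda>" and "\<Lambda> \<subseteq> int_lattice" and "is_spectrum \<nu> \<Lambda>"
  shows "spectral (delta_set A \<star> \<nu>)"
proof -
  obtain \<Gamma> where \<Gamma>: "countable \<Gamma>" "is_spectrum (delta_set A) \<Gamma>"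
    using assms(3) unfolding spectral_def by blast
  have prob_space_A: "prob_space (delta_set A)"
    using assms(3) unfolding spectral_def by blast
  then have "A \<noteq> {}" using not_prob_space_delta_set_empty by blast
  have "is_spectrum (delta_set A \<star> \<nu>) ((\<lambda>(g, m). g + m) ` (\<Gamma> \<times> \<Lambda>))"
    using assms \<open>A \<noteq> {}\<close> \<Gamma> prob_space.finite_measure[OF assms(4)]
    by (intro is_spectrum_delta_set_convolution)
  moreover have "prob_space (delta_set A \<star> \<nu>)"
    using prob_space_A assms(4,5) by (intro prob_space_convolution) simp_all
  moreover have "countable ((\<lambda>(g, m). g + m) ` (\<Gamma> \<times> \<Lambda>))"
    using \<Gamma>(1) assms(6) by simp
  ultimately show ?thesis unfolding spectral_def by auto
qed

end
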